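(* Under the setting described in the context, let $j\in J$ and let $u_j$ be an exact eigenfunction associated with $\lambda_i$. Assume $\Lambda_p\neq\lambda_i$ for all $p\notin J$. Let $W=\Pi_h u_j-\mathcal{P}_{a_h^\ell}u_j$, $\beta_p=m_h^\ell(W,U_p^\ell)$ for $p\notin J$, and $Z=\sum_{p\notin J}\frac{\lambda_i}{\Lambda_p-\lambda_i}\beta_pU_p^\ell$. Then $$\|W\|^2_{m_h^\ell}=m_h^\ell(u_j-\Pi_hu_j,Z)+(m-m_h^\ell)(u_j,Z)+\frac{1}{\lambda_i}(a_h^\ell-a)(u_j,Z),$$ $$\|W\|^2_{a_h^\ell}=\lambda_i\,m_h^\ell(u_j-\Pi_hu_j,W)+\lambda_i\|W\|^2_{m_h^\ell}+\lambda_i(m-m_h^\ell)(u_j,W)+(a_h^\ell-a)(u_j,W).$$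
   Context: Let $d\in\{2,3\}$ and $\Omega\subset\mathbb{R}^d$ a nonempty bounded connected open set with smooth boundary $\Gamma=\partial\Omega$; fix integers $r\ge1$, $k\ge1$; $\Omega$ is at least $C^{r+2}$ and $C^{k+1}$ regular. $H^1(\Omega,\Gamma)=\{u\in H^1(\Omega):u|_\Gamma\in H^1(\Gamma)\}$; $\nabla_\Gamma$ is the tangential gradient; $b(x)=x-\mathrm{d}(x)\nabla\mathrm{d}(x)$, $\mathrm{d}$ the signed distance to $\Gamma$, is the orthogonal projection onto $\Gamma$ near $\Gamma$. Continuous problem: $a(u,v)=\int_\Omega\nabla u\cdot\nabla v\,dx+\int_\Gamma\nabla_\Gamma u\cdot\nabla_\Gamma v\,ds+\int_\Gamma uv\,ds$, $m(u,v)=\int_\Omega uv\,dx$; eigenpairs $(\lambda_n,u_n)$, $a(u_n,v)=\lambda_n m(u_n,v)$ for all $v\in H^1(\Omega,\Gamma)$, eigenvalues increasing with multiplicity, $(u_n)$ $m$-orthonormal. Fix $\lambda_i$ of multiplicity $N$, $J=\{i,\dots,i+N-1\}$, $\lambda_j=\lambda_i$ for $j\in J$. Meshes and lift: $\mathcal{T}_h^{(1)}$ quasi-uniform simplicial meshes of size $h$ with boundary vertices on $\Gamma$, $T=F_T(\hat T)$ with $F_T$ affine. For $T$ with at least two vertices on $\Gamma$ (barycentric coordinates $\lambda_l$, vertices $\hat v_l$ of $\hat T$, $\varepsilon_l=1$ iff $F_T(\hat v_l)\in\Gamma$, $\lambda^*=\sum\varepsilon_l\lambda_l$, $\hat\sigma=\{\lambda^*=0\}$,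 $\hat y=\frac1{\lambda^*}\sum\varepsilon_l\lambda_l\hat v_l$): $F_T^{(e)}=F_T$ on $\hat\sigma$, $F_T^{(e)}(\hat x)=F_T(\hat x)+(\lambda^* )^{r+2}(b(F_T(\hat y))-F_T(\hat y))$ otherwise; else $F_T^{(e)}=F_T$. $F_T^{(r)}$ is the $\mathbb{P}^r$-Lagrange interpolant of $F_T^{(e)}$, $T^{(r)}=F_T^{(r)}(\hat T)$, $\Omega_h=\bigcup T^{(r)}$, $\Gamma_h=\partial\Omega_h$. $G_h:\Omega_h\to\Omega$ equals $F^{(e)}_{T^{(r)}}\circ(F_T^{(r)})^{-1}$ on $T^{(r)}$ (formula of $F_T^{(e)}$ with $F_T$ replaced by $F_T^{(r)}$); continuous, elementwise $C^1$-diffeomorphism, $G_h|_{\Gamma_h}=b$. Lift: $v^\ell\circ G_h=v$. Discrete: $\mathbb{V}_h=\{\chi\in C^0(\Omega_h):\chi|_{T^{(r)}}\circ F_T^{(r)}\in\mathbb{P}^k(\hat T)\}$, $\mathbb{V}_h^\ell$ its lifts; $a_h(U,V)=\int_{\Omega_h}\nabla U\cdot\nabla V+\int_{\Gamma_h}\nabla_{\Gamma_h}U\cdot\nabla_{\Gamma_h}V+\int_{\Gamma_h}UV$, $m_h(U,V)=\int_{\Omega_h}UV$; for $v,w\in H^1(\Omega,\Gamma)$, $a_h^\ell(v,w)=a_h(v\circ G_h,w\circ G_h)$, $m_h^\ell(v,w)=m_h(v\circ G_h,w\circ G_h)$, norms $\|v\|_{a_h^\ell}=a_h^\ell(v,v)^{1/2}$,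 $\|v\|_{m_h^\ell}=m_h^\ell(v,v)^{1/2}$. Discrete eigenpairs $(\Lambda_p,U_p)$, $p=1,\dots,\dim\mathbb{V}_h$: $a_h(U_p,V)=\Lambda_pm_h(U_p,V)$ for all $V\in\mathbb{V}_h$, $(U_p)$ $m_h$-orthonormal basis of $\mathbb{V}_h$. $\mathbb{F}_h^\ell=\mathrm{span}\{U_j^\ell:j\in J\}$. Projections on $H^1(\Omega,\Gamma)$: $\Pi_h v\in\mathbb{V}_h^\ell$ with $a_h^\ell(\Pi_hv,w)=a_h^\ell(v,w)$ for all $w\in\mathbb{V}_h^\ell$; $\mathcal{P}_{a_h^\ell}v\in\mathbb{F}_h^\ell$ with $a_h^\ell(\mathcal{P}_{a_h^\ell}v,w)=a_h^\ell(v,w)$ for all $w\in\mathbb{F}_h^\ell$; $\mathcal{P}_{m_h^\ell}v\in\mathbb{F}_h^\ell$ with $m_h^\ell(\mathcal{P}_{m_h^\ell}v,w)=m_h^\ell(v,w)$ for all $w\in\mathbb{F}_h^\ell$. *)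

theory Defs
  imports "HOL-Analysis.Analysis"
begin

text \<open>The type 'v plays the role of H^1(Omega,Gamma); the lifted
discrete space V_h^l is a finite-dimensional subspace of it, so every function
below is already lifted.\<close>

definition sym_form :: "('v \<Rightarrow> 'v \<Rightarrow> real) \<Rightarrow> bool" where
  "sym_form B \<longleftrightarrow> (\<forall>x y. B x y = B y x)"

definition pos_def_form :: "('v::zero \<Rightarrow> 'v \<Rightarrow> real) \<Rightarrow> bool" where
  "pos_def_form B \<longleftrightarrow> (\<forall>x. x \<noteq> 0 \<longrightarrow> B x x > 0)"

end

theory Submission
  imports Defs
begin

text \<open>The difference \<open>W = \<Pi>\<^sub>h u\<^sub>j - \<P> u\<^sub>j\<close> lies in \<open>V\<^sub>h\<close> and is \<open>a\<^sub>h\<close>-orthogonal to the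
discrete eigenspace \<open>F\<^sub>h = span {U\<^sub>q | q \<in> J}\<close>, since both projections reproduce \<open>u\<^sub>j\<close> when
tested against \<open>F\<^sub>h\<close>. Each \<open>U\<^sub>q\<close> is an eigenvector of the pair \<open>(a\<^sub>h, m\<^sub>h)\<close> with \<open>\<Lambda>\<^sub>q > 0\<close>, so
\<open>W\<close> is also \<open>m\<^sub>h\<close>-orthogonal to \<open>F\<^sub>h\<close> and Parseval gives \<open>m\<^sub>h(W,W) = \<Sum>\<^bsub>p\<notin>J\<^esub> \<beta>\<^sub>p\<^sup>2\<close>.
The weights \<open>\<lambda>/(\<Lambda>\<^sub>p - \<lambda>)\<close> in \<open>Z\<close> are chosen exactly so that
\<open>a\<^sub>h(W,Z)/\<lambda> - m\<^sub>h(W,Z) = \<Sum>\<^bsub>p\<notin>J\<^esub> \<beta>\<^sub>p\<^sup>2\<close>. Both identities then follow by inserting the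
Galerkin relation for \<open>\<Pi>\<^sub>h u\<^sub>j\<close>, the exact eigenvalue equation \<open>a(u\<^sub>j,\<cdot>) = \<lambda> m(u\<^sub>j,\<cdot>)\<close>,
and the orthogonality of \<open>\<P> u\<^sub>j \<in> F\<^sub>h\<close> to \<open>W\<close> and \<open>Z\<close> in both forms.\<close>

lemma bilinear_sum_scaleR_right:
  assumes "bilinear B"
  shows "B x (\<Sum>p\<in>A. c p *\<^sub>R v p) = (\<Sum>p\<in>A. c p * B x (v p))"
proof -
  have "linear (B x)"
    using assms by (simp add: bilinear_def)
  then show ?thesis
    by (simp add: linear_sum bilinear_rmul[OF assms] o_def)
qed

lemma bilinear_sum_scaleR_left:
  assumes "bilinear B"
  shows "B (\<Sum>p\<in>A. c p *\<^sub>R v p) y = (\<Sum>p\<in>A. c p * B (v p) y)"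
proof -
  have "linear (\<lambda>x. B x y)"
    using assms by (simp add: bilinear_def)
  then have "B (\<Sum>p\<in>A. c p *\<^sub>R v p) y = (\<Sum>p\<in>A. B (c p *\<^sub>R v p) y)"
    by (rule linear_sum)
  then show ?thesis
    by (simp add: bilinear_lmul[OF assms])
qed

lemma bilinear_eq_0_on_span_left:
  assumes "bilinear B" "x \<in> span S" "\<And>s. s \<in> S \<Longrightarrow> B s y = 0"
  shows "B x y = 0"
proof -
  have "linear (\<lambda>x. B x y)"
    using assms(1) by (simp add: bilinear_def)
  then show ?thesis
    using linear_eq_0_on_span assms(2,3) by blast
qed

lemma orthonormal_expansion:
  fixes B :: "'v::real_vector \<Rightarrow> 'v \<Rightarrow> real"
  assumes B: "bilinear B" and "finite A"
    and orth: "\<And>p q. p \<in> A \<Longrightarrow> q \<in> A \<Longrightarrow> B (U p) (U q) = (if p = q then 1 else 0)"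
    and w: "w \<in> span (U ` A)"
  shows "w = (\<Sum>p\<in>A. B w (U p) *\<^sub>R U p)"
proof -
  have "linear (\<lambda>w. \<Sum>p\<in>A. B w (U p) *\<^sub>R U p)"
    by (rule linearI) (simp_all add: bilinear_ladd[OF B] bilinear_lmul[OF B] scaleR_add_left
        sum.distrib scaleR_sum_right)
  then have "id w = (\<Sum>p\<in>A. B w (U p) *\<^sub>R U p)"
  proof (rule linear_eq_on_span[OF linear_id _ _ w])
    fix x assume "x \<in> U ` A"
    then obtain q where q: "q \<in> A" "x = U q" by auto
    have "(\<Sum>p\<in>A. B (U q) (U p) *\<^sub>R U p) = (\<Sum>p\<in>A. if q = p then U p else 0)"
      by (rule sum.cong) (auto simp: orth q)
    then show "id x = (\<Sum>p\<in>A. B x (U p) *\<^sub>R U p)"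
      using q \<open>finite A\<close> by simp
  qed
  then show ?thesis by simp
qed

lemma orthonormal_parseval:
  fixes B :: "'v::real_vector \<Rightarrow> 'v \<Rightarrow> real"
  assumes B: "bilinear B" and "finite A"
    and orth: "\<And>p q. p \<in> A \<Longrightarrow> q \<in> A \<Longrightarrow> B (U p) (U q) = (if p = q then 1 else 0)"
    and w: "w \<in> span (U ` A)"
  shows "B w w = (\<Sum>p\<in>A. (B w (U p))\<^sup>2)"
proof -
  have "B w w = B w (\<Sum>p\<in>A. B w (U p) *\<^sub>R U p)"
    using orthonormal_expansion[OF assms] by simp
  then show ?thesis
    by (simp add: bilinear_sum_scaleR_right[OF B] power2_eq_square)
qed

lemma eigenvalue_pos:
  assumes "pos_def_form A" "bilinear B" "A x x = l * B x x" "B x x > 0"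
  shows "l > 0"
proof -
  have "x \<noteq> 0"
    using assms(4) bilinear_lzero[OF assms(2)] by auto
  then have "A x x > 0"
    using assms(1) by (simp add: pos_def_form_def)
  then show ?thesis
    using assms(3,4) by (simp add: zero_less_mult_iff)
qed

lemma galerkin_error_identities:
  fixes a m ah mh :: "'v::real_vector \<Rightarrow> 'v \<Rightarrow> real"
  assumes ah: "bilinear ah" and mh: "bilinear mh"
    and eig: "\<And>v. a u v = lam * m u v" and "lam \<noteq> 0"
    and Galerkin: "ah Piu W = ah u W" "ah Piu Z = ah u Z"
    and W: "W = Piu - Pu"
    and Pu_orth: "ah Pu W = 0" "mh Pu W = 0" "ah Pu Z = 0" "mh Pu Z = 0"
    and pairing: "mh W W = (1 / lam) * ah W Z - mh W Z"
  shows "mh W W = mh (u - Piu) Z + (m u Z - mh u Z) + (1 / lam) * (ah u Z - a u Z)"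
    and "ah W W = lam * mh (u - Piu) W + lam * mh W W
                  + lam * (m u W - mh u W) + (ah u W - a u W)"
proof -
  have "ah Piu v = ah W v + ah Pu v" "mh Piu v = mh W v + mh Pu v" for v
    using W by (simp_all add: bilinear_lsub[OF ah] bilinear_lsub[OF mh])
  then have ah_Z: "ah u Z = ah W Z" and mh_Z: "mh Piu Z = mh W Z"
    and ah_W: "ah W W = ah u W" and mh_W: "mh Piu W = mh W W"
    using Galerkin Pu_orth by simp_all
  have "(1 / lam) * (ah u Z - a u Z) = (1 / lam) * ah W Z - m u Z"
    using \<open>lam \<noteq> 0\<close> by (simp add: ah_Z eig right_diff_distrib)
  then show "mh W W = mh (u - Piu) Z + (m u Z - mh u Z) + (1 / lam) * (ah u Z - a u Z)"
    by (simp add: pairing mh_Z bilinear_lsub[OF mh])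
  show "ah W W = lam * mh (u - Piu) W + lam * mh W W
                 + lam * (m u W - mh u W) + (ah u W - a u W)"
    by (simp add: ah_W mh_W eig bilinear_lsub[OF mh] algebra_simps)
qed

locale orthonormal_eigenbasis =
  fixes ah mh :: "'v::real_vector \<Rightarrow> 'v \<Rightarrow> real"
    and V :: "'v set" and I :: "nat set" and Lam :: "nat \<Rightarrow> real" and U :: "nat \<Rightarrow> 'v"
  assumes bilinear_ah: "bilinear ah" and bilinear_mh: "bilinear mh"
    and sym_ah: "sym_form ah" and sym_mh: "sym_form mh" and pos_def_ah: "pos_def_form ah"
    and finite_I: "finite I"
    and span_U: "span (U ` I) = V"
    and orthonormal: "\<And>p q. p \<in> I \<Longrightarrow> q \<in> I \<Longrightarrow> mh (U p) (U q) = (if p = q then 1 else 0)"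
    and eigen: "\<And>p v. p \<in> I \<Longrightarrow> v \<in> V \<Longrightarrow> ah (U p) v = Lam p * mh (U p) v"
begin

lemma ah_commute: "ah x y = ah y x" and mh_commute: "mh x y = mh y x"
  using sym_ah sym_mh by (simp_all add: sym_form_def)

lemma basis_in_space: "p \<in> I \<Longrightarrow> U p \<in> V"
  using span_U span_base by blast

lemma span_subset_space: "J \<subseteq> I \<Longrightarrow> span (U ` J) \<subseteq> V"
  using span_U span_mono image_mono by metis

lemma combination_in_space:
  assumes "A \<subseteq> I"
  shows "(\<Sum>p\<in>A. c p *\<^sub>R U p) \<in> V"
proof -
  have "(\<Sum>p\<in>A. c p *\<^sub>R U p) \<in> span (U ` A)"
    by (intro span_sum span_scale span_base imageI)
  then show ?thesis
    using span_subset_space[OF assms] by blast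
qed

lemma Lam_pos: "p \<in> I \<Longrightarrow> Lam p > 0"
  by (rule eigenvalue_pos[OF pos_def_ah bilinear_mh, where x = "U p"])
     (simp_all add: eigen basis_in_space orthonormal)

lemma eigen_right: "p \<in> I \<Longrightarrow> v \<in> V \<Longrightarrow> ah v (U p) = Lam p * mh v (U p)"
  using eigen ah_commute mh_commute by metis

lemma mh_orth_if_ah_orth:
  assumes "p \<in> I" "v \<in> V" "ah v (U p) = 0"
  shows "mh v (U p) = 0"
  using eigen_right[OF assms(1,2)] Lam_pos[OF assms(1)] assms(3) by simp

lemma projection_difference_orth_cluster:
  assumes "J \<subseteq> I" "q \<in> J" "x \<in> V" "y \<in> span (U ` J)"
    and "\<And>w. w \<in> V \<Longrightarrow> ah x w = ah u w" "\<And>w. w \<in> span (U ` J) \<Longrightarrow> ah y w = ah u w"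
  shows "mh (x - y) (U q) = 0"
proof (rule mh_orth_if_ah_orth)
  have "q \<in> I" "U q \<in> span (U ` J)"
    using assms(1,2) by (auto intro: span_base)
  then have "ah x (U q) = ah y (U q)"
    using assms(5,6) basis_in_space by simp
  then show "ah (x - y) (U q) = 0"
    by (simp add: bilinear_lsub[OF bilinear_ah])
  have "y \<in> V"
    using assms(1,4) span_subset_space by blast
  then show "x - y \<in> V"
    using assms(3) span_diff span_U by metis
qed (use assms(1,2) in auto)

lemma combination_coeff:
  assumes "A \<subseteq> I" "q \<in> I"
  shows "mh (\<Sum>p\<in>A. c p *\<^sub>R U p) (U q) = (if q \<in> A then c q else 0)"
proof -
  have "mh (\<Sum>p\<in>A. c p *\<^sub>R U p) (U q) = (\<Sum>p\<in>A. if p = q then c p else 0)"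
    using assms by (auto simp: bilinear_sum_scaleR_left[OF bilinear_mh] orthonormal intro!: sum.cong)
  then show ?thesis
    using finite_subset[OF assms(1) finite_I] by simp
qed

lemma orth_span_cluster:
  assumes "J \<subseteq> I" "v \<in> V" "x \<in> span (U ` J)" "\<And>q. q \<in> J \<Longrightarrow> mh v (U q) = 0"
  shows "mh x v = 0" "ah x v = 0"
proof -
  have "mh (U q) v = 0" "ah (U q) v = 0" if "q \<in> J" for q
    using that assms(1,2,4) eigen[of q v] mh_commute by auto
  then show "mh x v = 0" "ah x v = 0"
    using bilinear_eq_0_on_span_left[OF _ assms(3)] bilinear_mh bilinear_ah by blast+
qed

lemma parseval_off_cluster:
  assumes "v \<in> V" "J \<subseteq> I" "\<And>q. q \<in> J \<Longrightarrow> mh v (U q) = 0"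
  shows "mh v v = (\<Sum>p\<in>I - J. (mh v (U p))\<^sup>2)"
proof -
  have "mh v v = (\<Sum>p\<in>I. (mh v (U p))\<^sup>2)"
    by (rule orthonormal_parseval[OF bilinear_mh finite_I])
       (simp_all add: orthonormal span_U assms(1))
  also have "\<dots> = (\<Sum>p\<in>I - J. (mh v (U p))\<^sup>2)"
    by (rule sum.mono_neutral_right) (use assms(2,3) finite_I in auto)
  finally show ?thesis .
qed

lemma resolvent_pairing:
  assumes "K \<subseteq> I" "v \<in> V" "lam \<noteq> 0" "\<And>p. p \<in> K \<Longrightarrow> Lam p \<noteq> lam"
  defines "c \<equiv> \<lambda>p. lam / (Lam p - lam) * mh v (U p)"
  shows "(1 / lam) * ah v (\<Sum>p\<in>K. c p *\<^sub>R U p) - mh v (\<Sum>p\<in>K. c p *\<^sub>R U p)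
         = (\<Sum>p\<in>K. (mh v (U p))\<^sup>2)"
proof -
  have "ah v (\<Sum>p\<in>K. c p *\<^sub>R U p) = (\<Sum>p\<in>K. c p * (Lam p * mh v (U p)))"
    unfolding bilinear_sum_scaleR_right[OF bilinear_ah]
    using assms(1,2) by (intro sum.cong) (auto simp: eigen_right)
  then have "(1 / lam) * ah v (\<Sum>p\<in>K. c p *\<^sub>R U p) - mh v (\<Sum>p\<in>K. c p *\<^sub>R U p)
             = (\<Sum>p\<in>K. (1 / lam) * (c p * (Lam p * mh v (U p))) - c p * mh v (U p))"
    by (simp add: bilinear_sum_scaleR_right[OF bilinear_mh] sum_distrib_left sum_subtractf)
  also have "\<dots> = (\<Sum>p\<in>K. (mh v (U p))\<^sup>2)"
  proof (rule sum.cong[OF refl])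
    fix p assume "p \<in> K"
    have "(1 / lam) * (c p * (Lam p * mh v (U p))) - c p * mh v (U p)
          = (Lam p - lam) / (Lam p - lam) * (mh v (U p))\<^sup>2"
      using \<open>lam \<noteq> 0\<close> by (simp add: c_def field_simps power2_eq_square)
    then show "(1 / lam) * (c p * (Lam p * mh v (U p))) - c p * mh v (U p) = (mh v (U p))\<^sup>2"
      using assms(4)[OF \<open>p \<in> K\<close>] by simp
  qed
  finally show ?thesis .
qed

end

theorem mainTheorem4:
  fixes a m ah mh :: "'v::real_vector \<Rightarrow> 'v \<Rightarrow> real"
    and lam :: "nat \<Rightarrow> real" and u :: "nat \<Rightarrow> 'v"
    and Vh :: "'v set" and D :: nat and Lam :: "nat \<Rightarrow> real" and U :: "nat \<Rightarrow> 'v"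
    and i N j :: nat and Piu Pu :: 'v
  assumes forms: "bilinear a" "bilinear m" "bilinear ah" "bilinear mh"
    and syms: "sym_form a" "sym_form m" "sym_form ah" "sym_form mh"
    and posdef: "pos_def_form a" "pos_def_form m" "pos_def_form ah" "pos_def_form mh"
    \<comment> \<open>continuous eigenpairs (indexed from 1), increasing, m-orthonormal\<close>
    and cont_eig: "\<And>n v. n \<ge> 1 \<Longrightarrow> a (u n) v = lam n * m (u n) v"
    and cont_orth: "\<And>n n'. n \<ge> 1 \<Longrightarrow> n' \<ge> 1 \<Longrightarrow> m (u n) (u n') = (if n = n' then 1 else 0)"
    and cont_mono: "\<And>n n'. 1 \<le> n \<Longrightarrow> n \<le> n' \<Longrightarrow> lam n \<le> lam n'"
    \<comment> \<open>lam i has multiplicity N, J = {i..i+N-1}\<close>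
    and iN: "i \<ge> 1" "N \<ge> 1"
    and mult: "\<And>n. n \<in> {i..i+N-1} \<Longrightarrow> lam n = lam i"
    and mult_lo: "i > 1 \<Longrightarrow> lam (i - 1) < lam i"
    and mult_hi: "lam (i + N) > lam i"
    \<comment> \<open>discrete (lifted) space and discrete eigenpairs, p = 1..dim V_h\<close>
    and Vh_sub: "subspace Vh"
    and Vh_dim: "dim Vh = D"
    and U_in: "\<And>p. p \<in> {1..D} \<Longrightarrow> U p \<in> Vh"
    and U_span: "span (U ` {1..D}) = Vh"
    and disc_orth: "\<And>p q. p \<in> {1..D} \<Longrightarrow> q \<in> {1..D} \<Longrightarrow> mh (U p) (U q) = (if p = q then 1 else 0)"
    and disc_eig: "\<And>p V. p \<in> {1..D} \<Longrightarrow> V \<in> Vh \<Longrightarrow> ah (U p) V = Lam p * mh (U p) V"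
    and disc_mono: "\<And>p q. p \<in> {1..D} \<Longrightarrow> q \<in> {1..D} \<Longrightarrow> p \<le> q \<Longrightarrow> Lam p \<le> Lam q"
    and J_sub: "{i..i+N-1} \<subseteq> {1..D}"
    \<comment> \<open>hypotheses of the theorem\<close>
    and jJ: "j \<in> {i..i+N-1}"
    and sep: "\<And>p. p \<in> {1..D} - {i..i+N-1} \<Longrightarrow> Lam p \<noteq> lam i"
    \<comment> \<open>Piu = Pi_h u_j and Pu = P_{a_h^l} u_j\<close>
    and Piu: "Piu \<in> Vh" "\<And>w. w \<in> Vh \<Longrightarrow> ah Piu w = ah (u j) w"
    and Pu: "Pu \<in> span (U ` {i..i+N-1})"
            "\<And>w. w \<in> span (U ` {i..i+N-1}) \<Longrightarrow> ah Pu w = ah (u j) w"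
  shows "let W = Piu - Pu;
             \<beta> = (\<lambda>p. mh W (U p));
             Z = (\<Sum>p\<in>{1..D} - {i..i+N-1}. (lam i / (Lam p - lam i) * \<beta> p) *\<^sub>R U p)
         in mh W W = mh (u j - Piu) Z + (m (u j) Z - mh (u j) Z) + (1 / lam i) * (ah (u j) Z - a (u j) Z)
          \<and> ah W W = lam i * mh (u j - Piu) W + lam i * mh W W
                     + lam i * (m (u j) W - mh (u j) W) + (ah (u j) W - a (u j) W)"
proof -
  interpret orthonormal_eigenbasis ah mh Vh "{1..D}" Lam U
    by (rule orthonormal_eigenbasis.intro[OF forms(3,4) syms(3,4) posdef(3) _ U_span disc_orth disc_eig])
       simp
  define J where "J = {i..i+N-1}"
  define W where "W = Piu - Pu"
  define Z where "Z = (\<Sum>p\<in>{1..D} - J. (lam i / (Lam p - lam i) * mh W (U p)) *\<^sub>R U p)"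
  have "j \<ge> 1"
    using jJ iN by simp
  then have eig_uj: "\<And>v. a (u j) v = lam i * m (u j) v"
    using cont_eig mult[OF jJ] by simp
  have "lam i > 0"
    using eigenvalue_pos[OF posdef(1) forms(2), where x = "u j"] eig_uj cont_orth \<open>j \<ge> 1\<close> by simp
  have J_sub_I: "J \<subseteq> {1..D}" and Pu_span: "Pu \<in> span (U ` J)"
    using J_sub Pu(1) by (simp_all add: J_def)
  have W_in: "W \<in> Vh" and Z_in: "Z \<in> Vh"
    using Piu(1) Pu_span span_subset_space[OF J_sub_I] combination_in_space
    by (auto simp: W_def Z_def intro: subspace_diff[OF Vh_sub])
  have W_orth: "mh W (U q) = 0" if "q \<in> J" for q
    unfolding W_def
    by (rule projection_difference_orth_cluster[OF J_sub_I that Piu(1) Pu_span Piu(2) Pu(2)[folded J_def]])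
  have Z_orth: "mh Z (U q) = 0" if "q \<in> J" for q
    using combination_coeff[of "{1..D} - J" q] that J_sub_I by (auto simp: Z_def)
  have "mh W W = (1 / lam i) * ah W Z - mh W Z"
    using parseval_off_cluster[OF W_in J_sub_I W_orth] resolvent_pairing[of "{1..D} - J" W "lam i"]
      W_in sep \<open>lam i > 0\<close> by (simp add: Z_def J_def)
  then have "mh W W = mh (u j - Piu) Z + (m (u j) Z - mh (u j) Z) + (1 / lam i) * (ah (u j) Z - a (u j) Z)"
    and "ah W W = lam i * mh (u j - Piu) W + lam i * mh W W
                  + lam i * (m (u j) W - mh (u j) W) + (ah (u j) W - a (u j) W)"
    using galerkin_error_identities[where a = a and m = m and u = "u j" and lam = "lam i",
        OF forms(3,4) eig_uj _ Piu(2)[OF W_in] Piu(2)[OF Z_in] W_def]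
      orth_span_cluster[OF J_sub_I W_in Pu_span W_orth] orth_span_cluster[OF J_sub_I Z_in Pu_span Z_orth]
      \<open>lam i > 0\<close> by simp_all
  then show ?thesis
    unfolding Let_def W_def Z_def J_def by simp
qed

end
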